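(* Let $\sigma$ and $\sigma''$ be density matrices on $\mathcal{H}$ with the same support. Then $d(\sigma'')=d(\sigma)$.
   Context: $\mathcal{H}=\mathcal{H}_1\otimes\cdots\otimes\mathcal{H}_m$ is finite-dimensional. A positive semidefinite operator is separable if it is a nonnegative combination of tensor products of positive semidefinite operators on the $\mathcal{H}_k$. The support of a density matrix is the span of its eigenvectors with nonzero eigenvalues. For a density matrix $\sigma$, $d(\sigma):=\min \mathrm{Tr}(\Pi)/\mathrm{Tr}(\sigma\Pi)$ over separable positive semidefinite operators $\Pi$ with $\mathrm{Tr}(\sigma\Pi)>0$ and $0\le \Pi/\mathrm{Tr}(\sigma\Pi)\le I$ (equivalently, $\min\mathrm{Tr}\,\Pi'$ over separable $\Pi'$ with $0\le\Pi'\le I$ and $\mathrm{Tr}(\sigma\Pi')=1$). *)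

theory Defs
  imports "HOL-Analysis.Analysis"
begin

text \<open>Operators on a finite-dimensional space with orthonormal basis indexed by a
finite set I are represented by their matrices, i.e. functions I x I to complex;
vectors are functions I to complex vanishing outside I.\<close>

type_synonym 'i op = "'i \<Rightarrow> 'i \<Rightarrow> complex"

definition tr :: "'i set \<Rightarrow> 'i op \<Rightarrow> complex" where
  "tr I A = (\<Sum>i\<in>I. A i i)"

definition opmul :: "'i set \<Rightarrow> 'i op \<Rightarrow> 'i op \<Rightarrow> 'i op" where
  "opmul I A B = (\<lambda>i j. \<Sum>k\<in>I. A i k * B k j)"

definition idop :: "'i op" where
  "idop = (\<lambda>i j. if i = j then 1 else 0)"

definition hermitian_on :: "'i set \<Rightarrow> 'i op \<Rightarrow> bool" where
  "hermitian_on I A \<longleftrightarrow> (\<forall>i\<in>I. \<forall>j\<in>I. A i j = cnj (A j i))"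

definition psd_on :: "'i set \<Rightarrow> 'i op \<Rightarrow> bool" where
  "psd_on I A \<longleftrightarrow> hermitian_on I A \<and>
     (\<forall>v :: 'i \<Rightarrow> complex. Im (\<Sum>i\<in>I. \<Sum>j\<in>I. cnj (v i) * A i j * v j) = 0 \<and>
                              Re (\<Sum>i\<in>I. \<Sum>j\<in>I. cnj (v i) * A i j * v j) \<ge> 0)"

definition density_on :: "'i set \<Rightarrow> 'i op \<Rightarrow> bool" where
  "density_on I \<rho> \<longleftrightarrow> psd_on I \<rho> \<and> tr I \<rho> = 1"

definition vecs_on :: "'i set \<Rightarrow> ('i \<Rightarrow> complex) set" where
  "vecs_on I = {v. \<forall>i. i \<notin> I \<longrightarrow> v i = 0}"

definition apply_op :: "'i set \<Rightarrow> 'i op \<Rightarrow> ('i \<Rightarrow> complex) \<Rightarrow> ('i \<Rightarrow> complex)" where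
  "apply_op I A v = (\<lambda>i. if i \<in> I then (\<Sum>j\<in>I. A i j * v j) else 0)"

definition nz_eigvecs :: "'i set \<Rightarrow> 'i op \<Rightarrow> ('i \<Rightarrow> complex) set" where
  "nz_eigvecs I A = {v \<in> vecs_on I. v \<noteq> (\<lambda>_. 0) \<and>
                       (\<exists>e. e \<noteq> 0 \<and> apply_op I A v = (\<lambda>i. e * v i))}"

definition cspan :: "('i \<Rightarrow> complex) set \<Rightarrow> ('i \<Rightarrow> complex) set" where
  "cspan E = {w. \<exists>S c. finite S \<and> S \<subseteq> E \<and> w = (\<lambda>i. \<Sum>u\<in>S. c u * u i)}"

definition support :: "'i set \<Rightarrow> 'i op \<Rightarrow> ('i \<Rightarrow> complex) set" where
  "support I \<rho> = cspan (nz_eigvecs I \<rho>)"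

text \<open>Multipartite space H_1 \<otimes> ... \<otimes> H_m with dim H_k = dims!k: basis indexed by
tuples (lists) xs with xs!k < dims!k.\<close>
definition tidx :: "nat list \<Rightarrow> nat list set" where
  "tidx dims = {xs. length xs = length dims \<and> (\<forall>k<length dims. xs ! k < dims ! k)}"

text \<open>Separable: nonnegative (finite) combination of tensor products of PSD operators
on the factors.  The tensor product of A_0, ..., A_{m-1} has matrix entries
prod_k A_k (i!k) (j!k).\<close>
definition separable :: "nat list \<Rightarrow> nat list op \<Rightarrow> bool" where
  "separable dims P \<longleftrightarrow>
     (\<exists>(n::nat) (c :: nat \<Rightarrow> real) (A :: nat \<Rightarrow> nat \<Rightarrow> nat op).
        (\<forall>l<n. c l \<ge> 0 \<and> (\<forall>k<length dims. psd_on {..<dims ! k} (A l k))) \<and>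
        (\<forall>i\<in>tidx dims. \<forall>j\<in>tidx dims.
            P i j = (\<Sum>l<n. of_real (c l) * (\<Prod>k<length dims. A l k (i ! k) (j ! k)))))"

text \<open>d(sigma) = min Tr(P)/Tr(sigma P) over separable PSD P with Tr(sigma P) > 0 and
0 \<le> P/Tr(sigma P) \<le> I.  (Tr(sigma P) is real for PSD sigma, P.)\<close>
definition dval :: "nat list \<Rightarrow> nat list op \<Rightarrow> real" where
  "dval dims \<sigma> = Inf {Re (tr (tidx dims) P) / Re (tr (tidx dims) (opmul (tidx dims) \<sigma> P)) | P.
       separable dims P \<and> psd_on (tidx dims) P \<and>
       Re (tr (tidx dims) (opmul (tidx dims) \<sigma> P)) > 0 \<and>
       (let t = Re (tr (tidx dims) (opmul (tidx dims) \<sigma> P)) in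
          psd_on (tidx dims) (\<lambda>i j. P i j / of_real t) \<and>
          psd_on (tidx dims) (\<lambda>i j. idop i j - P i j / of_real t))}"

end

theory Submission
  imports Defs "Jordan_Normal_Form.Jordan_Normal_Form_Existence"
begin

(* Let P be feasible for sigma, with t = Tr(sigma P) > 0.  Then
   R = I - P/t is positive semidefinite and Tr(sigma R) = Tr sigma - Tr(sigma P)/t = 0.
   For positive semidefinite S and R one has Tr(S R) = 0 exactly when R annihilates the
   support of S: writing S = sum_k lambda_k u_k u_k^* with lambda_k > 0 and orthonormal u_k,
   Tr(S R) = sum_k lambda_k <u_k, R u_k> is a sum of nonnegative terms, and a vanishing
   quadratic form <u, R u> of a PSD operator forces R u = 0.  Since sigma and sigma'' have the
   same support, also Tr(sigma'' R) = 0, i.e. Tr(sigma'' P) = t.  Hence sigma and sigma'' have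
   the same feasible operators with the same objective values, and d(sigma'') = d(sigma). *)

definition ip :: "'i set \<Rightarrow> ('i \<Rightarrow> complex) \<Rightarrow> ('i \<Rightarrow> complex) \<Rightarrow> complex" where
  "ip I u v = (\<Sum>i\<in>I. cnj (u i) * v i)"

lemma ip_cnj_swap: "ip I y x = cnj (ip I x y)"
  unfolding ip_def by (simp add: mult.commute)

lemma ip_self: "ip I x x = of_real (\<Sum>i\<in>I. (cmod (x i))\<^sup>2)"
proof -
  have "cnj z * z = of_real ((cmod z)\<^sup>2)" for z
    using complex_norm_square[of z] by (simp add: mult.commute)
  thus ?thesis unfolding ip_def of_real_sum by simp
qed

lemma ip_self_nonneg: "0 \<le> Re (ip I x x)"
  unfolding ip_self by (simp add: sum_nonneg)

lemma ip_self_eq_0: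
  assumes "finite I" "x \<in> vecs_on I"
  shows "ip I x x = 0 \<longleftrightarrow> x = (\<lambda>_. 0)"
proof
  assume "ip I x x = 0"
  hence "(\<Sum>i\<in>I. (cmod (x i))\<^sup>2) = 0" unfolding ip_self by (rule of_real_eq_0_iff[THEN iffD1])
  hence "(cmod (x i))\<^sup>2 = 0" if "i \<in> I" for i
    using assms(1) that sum_nonneg_eq_0_iff[of I "\<lambda>i. (cmod (x i))\<^sup>2"] by auto
  thus "x = (\<lambda>_. 0)" using assms(2) unfolding vecs_on_def by fastforce
qed (simp add: ip_def)


lemma ip_scale_left: "ip I (\<lambda>i. c * x i) y = cnj c * ip I x y"
  unfolding ip_def by (simp add: sum_distrib_left mult.assoc)

lemma ip_scale_right: "ip I x (\<lambda>i. c * y i) = c * ip I x y"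
  unfolding ip_def by (simp add: sum_distrib_left mult.left_commute)

lemma ip_zero_left [simp]: "ip I (\<lambda>_. 0) x = 0"
  unfolding ip_def by simp

lemma ip_zero_right [simp]: "ip I x (\<lambda>_. 0) = 0"
  unfolding ip_def by simp

lemma ip_lin_left: "ip I (\<lambda>j. a * x j + b * y j) z = cnj a * ip I x z + cnj b * ip I y z"
  unfolding ip_def by (simp add: algebra_simps sum.distrib sum_distrib_left)

lemma ip_lin_right: "ip I z (\<lambda>j. a * x j + b * y j) = a * ip I z x + b * ip I z y"
  unfolding ip_def by (simp add: algebra_simps sum.distrib sum_distrib_left)

lemma ip_diff_left: "ip I (\<lambda>j. x j - y j) z = ip I x z - ip I y z"
  unfolding ip_def by (simp add: algebra_simps sum_subtractf)

lemma ip_diff_right: "ip I z (\<lambda>j. x j - y j) = ip I z x - ip I z y"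
  unfolding ip_def by (simp add: algebra_simps sum_subtractf)

lemma ip_sum_left: "ip I (\<lambda>j. \<Sum>k\<in>K. c k * u k j) z = (\<Sum>k\<in>K. cnj (c k) * ip I (u k) z)"
  unfolding ip_def
  by (simp add: cnj_sum sum_distrib_left sum_distrib_right mult.assoc sum.swap[of _ I])

lemma ip_sum_right: "ip I z (\<lambda>j. \<Sum>k\<in>K. c k * u k j) = (\<Sum>k\<in>K. c k * ip I z (u k))"
  unfolding ip_def by (simp add: sum_distrib_left mult.left_commute sum.swap[of _ I])

lemma apply_op_vecs: "apply_op I A x \<in> vecs_on I"
  unfolding vecs_on_def apply_op_def by simp

lemma apply_op_scale: "apply_op I A (\<lambda>j. c * x j) = (\<lambda>i. c * apply_op I A x i)"
  unfolding apply_op_def by (auto simp: sum_distrib_left mult.left_commute)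

lemma apply_op_lin:
  "apply_op I A (\<lambda>j. a * x j + b * y j) = (\<lambda>i. a * apply_op I A x i + b * apply_op I A y i)"
  unfolding apply_op_def by (auto simp: sum.distrib sum_distrib_left algebra_simps)

lemma apply_op_sum:
  "apply_op I A (\<lambda>j. \<Sum>k\<in>K. c k * u k j) = (\<lambda>i. \<Sum>k\<in>K. c k * apply_op I A (u k) i)"
  unfolding apply_op_def by (auto simp: sum_distrib_left mult.left_commute sum.swap[of _ I])

lemma psd_quadratic_form:
  assumes "psd_on I A"
  shows "Im (ip I v (apply_op I A v)) = 0" "Re (ip I v (apply_op I A v)) \<ge> 0"
proof -
  have "(\<Sum>i\<in>I. \<Sum>j\<in>I. cnj (v i) * A i j * v j) = ip I v (apply_op I A v)"
    unfolding ip_def apply_op_def by (auto simp: sum_distrib_left mult.assoc intro: sum.cong)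
  moreover have "Im (\<Sum>i\<in>I. \<Sum>j\<in>I. cnj (v i) * A i j * v j) = 0 \<and>
                 Re (\<Sum>i\<in>I. \<Sum>j\<in>I. cnj (v i) * A i j * v j) \<ge> 0"
    using assms unfolding psd_on_def by blast
  ultimately show "Im (ip I v (apply_op I A v)) = 0" "Re (ip I v (apply_op I A v)) \<ge> 0"
    by simp_all
qed

text \<open>Hermitian symmetry \<open>A\<^sub>j\<^sub>i = cnj A\<^sub>i\<^sub>j\<close>, oriented for rewriting.\<close>
lemma hermitian_entry: "hermitian_on I A \<Longrightarrow> i \<in> I \<Longrightarrow> j \<in> I \<Longrightarrow> cnj (A i j) = A j i"
  unfolding hermitian_on_def by (metis complex_cnj_cnj)

lemma hermitian_adjoint:
  assumes "hermitian_on I A"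
  shows "ip I (apply_op I A x) y = ip I x (apply_op I A y)"
proof -
  have "ip I (apply_op I A x) y = (\<Sum>i\<in>I. \<Sum>j\<in>I. cnj (A i j) * cnj (x j) * y i)"
    unfolding ip_def apply_op_def
    by (intro sum.cong refl) (simp add: cnj_sum sum_distrib_right)
  also have "\<dots> = (\<Sum>i\<in>I. \<Sum>j\<in>I. A j i * cnj (x j) * y i)"
    using hermitian_entry[OF assms] by (intro sum.cong refl) simp
  also have "\<dots> = (\<Sum>j\<in>I. \<Sum>i\<in>I. A j i * cnj (x j) * y i)"
    by (rule sum.swap)
  also have "\<dots> = ip I x (apply_op I A y)"
    unfolding ip_def apply_op_def
    by (intro sum.cong refl) (simp add: sum_distrib_left mult.commute mult.left_commute)
  finally show ?thesis .
qed

text \<open>Eigenvalues of Hermitian operators are real: \<open>e\<parallel>v\<parallel>\<^sup>2 = \<langle>v, A v\<rangle> = \<langle>A v, v\<rangle> = cnj e \<parallel>v\<parallel>\<^sup>2\<close>.\<close>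
lemma hermitian_eigenvalue_real:
  assumes fin: "finite I" and herm: "hermitian_on I A"
    and v: "v \<in> vecs_on I" "v \<noteq> (\<lambda>_. 0)" and ev: "apply_op I A v = (\<lambda>i. e * v i)"
  shows "e = of_real (Re e)"
proof -
  have "ip I v v \<noteq> 0" using ip_self_eq_0[OF fin v(1)] v(2) by simp
  moreover have "cnj e * ip I v v = e * ip I v v"
    using hermitian_adjoint[OF herm, of v v] unfolding ev ip_scale_left ip_scale_right .
  ultimately have "cnj e = e" by simp
  thus ?thesis by (simp add: complex_eq_iff)
qed

text \<open>For Hermitian \<open>A\<close>, \<open>\<parallel>A y\<parallel>\<^sup>2 = \<langle>y, A\<^sup>2 y\<rangle>\<close>; hence \<open>A\<^sup>2 y = 0\<close> implies \<open>A y = 0\<close>, and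
  a nilpotent Hermitian operator is zero.\<close>
lemma hermitian_square_zero:
  assumes fin: "finite I" and herm: "hermitian_on I A"
    and sq: "apply_op I A (apply_op I A y) = (\<lambda>_. 0)"
  shows "apply_op I A y = (\<lambda>_. 0)"
proof -
  have "ip I (apply_op I A y) (apply_op I A y) = ip I y (apply_op I A (apply_op I A y))"
    by (rule hermitian_adjoint[OF herm])
  also have "\<dots> = 0" unfolding sq by simp
  finally show ?thesis using ip_self_eq_0[OF fin apply_op_vecs] by simp
qed

lemma hermitian_power_zero:
  assumes fin: "finite I" and herm: "hermitian_on I A"
  shows "(apply_op I A ^^ Suc k) x = (\<lambda>_. 0) \<Longrightarrow> apply_op I A x = (\<lambda>_. 0)"
proof (induction k)
  case 0 thus ?case by simp
next
  case (Suc k)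
  have "apply_op I A (apply_op I A ((apply_op I A ^^ k) x)) = (\<lambda>_. 0)"
    using Suc.prems by (simp only: funpow.simps(2) o_apply)
  hence "apply_op I A ((apply_op I A ^^ k) x) = (\<lambda>_. 0)"
    by (rule hermitian_square_zero[OF fin herm])
  hence "(apply_op I A ^^ Suc k) x = (\<lambda>_. 0)" by (simp only: funpow.simps(2) o_apply)
  thus ?case by (rule Suc.IH)
qed

section \<open>Existence of an eigenvector with nonzero eigenvalue\<close>

text \<open>A Jordan matrix of dimension \<open>n\<close> built from blocks for the eigenvalue 0 vanishes at the
  power \<open>n\<close>, since a nilpotent Jordan block of size \<open>m \<le> n\<close> does.\<close>
lemma jordan_matrix_pow_zero:
  fixes n_as :: "(nat \<times> 'a :: field) list"
  assumes blocks: "\<And>m a. (m, a) \<in> set n_as \<Longrightarrow> a = 0 \<and> m \<le> n"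
    and dim: "sum_list (map fst n_as) = n"
  shows "jordan_matrix n_as ^\<^sub>m n = 0\<^sub>m n n"
proof -
  let ?f = "\<lambda>(m, a). jordan_block m a ^\<^sub>m n"
  have "elements_mat (?f x) \<subseteq> {0}" if "x \<in> set n_as" for x
  proof -
    obtain m a where x: "x = (m, a)" by force
    have "a = 0" "m \<le> n" using blocks that x by auto
    thus ?thesis unfolding x by (auto simp: elements_mat_def jordan_block_zero_pow)
  qed
  hence "\<Union> (set (map elements_mat (map ?f n_as))) \<subseteq> {0}" by auto
  hence J_elements: "elements_mat (jordan_matrix n_as ^\<^sub>m n) \<subseteq> {0}"
    unfolding jordan_matrix_pow using elements_diag_block_mat[of "map ?f n_as"] by blast
  have Jc: "jordan_matrix n_as \<in> carrier_mat n n"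
    using dim unfolding carrier_mat_def by simp
  show ?thesis
  proof (rule eq_matI)
    fix i j assume ij: "i < dim_row (0\<^sub>m n n :: 'a mat)" "j < dim_col (0\<^sub>m n n :: 'a mat)"
    have "(jordan_matrix n_as ^\<^sub>m n) $$ (i, j) \<in> elements_mat (jordan_matrix n_as ^\<^sub>m n)"
      using ij Jc by (intro elements_matI[of _ n n]) auto
    thus "(jordan_matrix n_as ^\<^sub>m n) $$ (i, j) = 0\<^sub>m n n $$ (i, j)" using ij J_elements by auto
  qed (use Jc dim in auto)
qed

text \<open>A complex square matrix without nonzero eigenvalues is nilpotent: every eigenvalue of its
  Jordan normal form is a root of the characteristic polynomial, hence an eigenvalue, hence 0.\<close>
lemma nilpotent_if_no_nonzero_eigenvalue:
  fixes M :: "complex mat"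
  assumes M: "M \<in> carrier_mat n n"
    and noev: "\<And>u e. eigenvector M u e \<Longrightarrow> e = 0"
  shows "M ^\<^sub>m n = 0\<^sub>m n n"
proof -
  obtain as where cp: "char_poly M = (\<Prod>a\<leftarrow>as. [:- a, 1:])"
    using char_poly_factorized[OF M] by blast
  obtain n_as where jnf: "jordan_nf M n_as" using jordan_nf_exists[OF M cp] by blast
  obtain P Q where P: "P \<in> carrier_mat n n" and Q: "Q \<in> carrier_mat n n"
    and cp2: "char_poly M = (\<Prod>(na, a)\<leftarrow>n_as. [:- a, 1:] ^ na)"
    and pw: "\<And>k. M ^\<^sub>m k = P * (jordan_matrix n_as)^\<^sub>m k * Q"
    using jordan_nf_powE[OF M jnf] by metis
  have nz: "0 \<notin> fst ` set n_as" and sim: "similar_mat M (jordan_matrix n_as)"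
    using jnf unfolding jordan_nf_def by auto
  have "jordan_matrix n_as \<in> carrier_mat n n"
    using sim M unfolding similar_mat_def similar_mat_wit_def Let_def by auto
  hence dim: "sum_list (map fst n_as) = n" by (metis carrier_matD(1) jordan_matrix_dim(1))
  have "a = 0 \<and> m \<le> n" if mem: "(m, a) \<in> set n_as" for m a
  proof
    have "m \<noteq> 0" using nz mem by force
    have "[:- a, 1:] ^ m dvd char_poly M"
      unfolding cp2 by (rule prod_list_dvd) (use mem in force)
    moreover have "[:- a, 1:] dvd [:- a, 1:] ^ m" using \<open>m \<noteq> 0\<close> by (intro dvd_power) simp
    ultimately have "poly (char_poly M) a = 0" by (meson dvd_trans poly_eq_0_iff_dvd)
    hence "eigenvalue M a" using eigenvalue_root_char_poly[OF M] by simp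
    then show "a = 0" using noev unfolding eigenvalue_def by blast
    have "m \<in> set (map fst n_as)" using mem by force
    from member_le_sum_list[OF this] show "m \<le> n" using dim by simp
  qed
  hence "jordan_matrix n_as ^\<^sub>m n = 0\<^sub>m n n" using dim by (rule jordan_matrix_pow_zero)
  thus ?thesis unfolding pw using P Q by simp
qed

text \<open>To use matrix results, an operator on \<open>I\<close> is transported along an enumeration
  \<open>h : {0..<n} \<rightarrow> I\<close> to its coordinate matrix.\<close>
definition coord_mat :: "nat \<Rightarrow> (nat \<Rightarrow> 'i) \<Rightarrow> 'i op \<Rightarrow> complex mat" where
  "coord_mat n h A = Matrix.mat n n (\<lambda>(a, b). A (h a) (h b))"

definition coord_vec :: "nat \<Rightarrow> (nat \<Rightarrow> 'i) \<Rightarrow> ('i \<Rightarrow> complex) \<Rightarrow> complex Matrix.vec" where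
  "coord_vec n h x = Matrix.vec n (\<lambda>a. x (h a))"

lemma coord_mult:
  assumes bij: "bij_betw h {0..<n} I"
  shows "coord_mat n h A *\<^sub>v coord_vec n h x = coord_vec n h (apply_op I A x)"
proof (rule eq_vecI)
  fix a assume "a < dim_vec (coord_vec n h (apply_op I A x))"
  hence an: "a < n" by (simp add: coord_vec_def)
  hence "h a \<in> I" using bij unfolding bij_betw_def by auto
  have "(coord_mat n h A *\<^sub>v coord_vec n h x) $ a = (\<Sum>b\<in>{0..<n}. A (h a) (h b) * x (h b))"
    using an by (simp add: coord_mat_def coord_vec_def scalar_prod_def)
  also have "\<dots> = (\<Sum>j\<in>I. A (h a) j * x j)"
    by (rule sum.reindex_bij_betw[OF bij])
  also have "\<dots> = coord_vec n h (apply_op I A x) $ a"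
    using an \<open>h a \<in> I\<close> by (simp add: coord_vec_def apply_op_def)
  finally show "(coord_mat n h A *\<^sub>v coord_vec n h x) $ a = coord_vec n h (apply_op I A x) $ a" .
qed (simp add: coord_mat_def coord_vec_def)

lemma coord_power:
  assumes bij: "bij_betw h {0..<n} I"
  shows "(coord_mat n h A ^\<^sub>m k) *\<^sub>v coord_vec n h x = coord_vec n h ((apply_op I A ^^ k) x)"
proof (induction k arbitrary: x)
  case 0 show ?case by (simp add: coord_mat_def coord_vec_def one_mult_mat_vec)
next
  case (Suc k)
  have M: "coord_mat n h A \<in> carrier_mat n n" unfolding coord_mat_def carrier_mat_def by simp
  have "(coord_mat n h A ^\<^sub>m Suc k) *\<^sub>v coord_vec n h x
      = (coord_mat n h A ^\<^sub>m k) *\<^sub>v (coord_mat n h A *\<^sub>v coord_vec n h x)"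
    by (simp, rule assoc_mult_mat_vec[of _ n n _ n])
       (auto intro: pow_carrier_mat[OF M] M simp: coord_vec_def)
  also have "\<dots> = coord_vec n h ((apply_op I A ^^ k) (apply_op I A x))"
    unfolding coord_mult[OF bij] by (rule Suc.IH)
  finally show ?case by (simp only: funpow_Suc_right o_apply)
qed

lemma coord_vec_inj:
  assumes bij: "bij_betw h {0..<n} I" and y: "y \<in> vecs_on I" and z: "z \<in> vecs_on I"
    and eq: "coord_vec n h y = coord_vec n h z"
  shows "y = z"
proof
  fix i show "y i = z i"
  proof (cases "i \<in> I")
    case True
    then obtain a where a: "a < n" "h a = i" using bij unfolding bij_betw_def by auto
    have "Matrix.vec_index (coord_vec n h y) a = Matrix.vec_index (coord_vec n h z) a"
      using eq by simp
    thus ?thesis using a by (simp add: coord_vec_def)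
  qed (use y z in \<open>simp add: vecs_on_def\<close>)
qed

lemma coord_eigenvector:
  assumes bij: "bij_betw h {0..<n} I"
    and ev: "eigenvector (coord_mat n h A) u e"
  shows "\<exists>v. v \<in> vecs_on I \<and> v \<noteq> (\<lambda>_. 0) \<and> apply_op I A v = (\<lambda>i. e * v i)"
proof -
  define g where "g = inv_into {0..<n} h"
  define v where "v = (\<lambda>i. if i \<in> I then u $ g i else 0)"
  have u: "u \<in> carrier_vec n" "u \<noteq> 0\<^sub>v n" "coord_mat n h A *\<^sub>v u = e \<cdot>\<^sub>v u"
    using ev unfolding eigenvector_def by (auto simp: coord_mat_def)
  have hI: "a < n \<Longrightarrow> h a \<in> I" and gh: "a < n \<Longrightarrow> g (h a) = a" for a
    using bij unfolding g_def bij_betw_def by (auto simp: inv_into_f_f)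
  have hg: "i \<in> I \<Longrightarrow> h (g i) = i" "i \<in> I \<Longrightarrow> g i < n" for i
    using bij unfolding g_def bij_betw_def by (auto simp: f_inv_into_f inv_into_into)
  have uv: "coord_vec n h v = u"
    using u(1) hI gh unfolding v_def coord_vec_def by (intro eq_vecI) auto
  have v: "v \<in> vecs_on I" unfolding vecs_on_def v_def by simp
  have "coord_vec n h (apply_op I A v) = coord_vec n h (\<lambda>i. e * v i)"
    unfolding coord_mult[OF bij, symmetric] uv u(3) using u(1)
    by (intro eq_vecI) (auto simp: coord_vec_def uv[symmetric])
  moreover have "(\<lambda>i. e * v i) \<in> vecs_on I" using v by (simp add: vecs_on_def)
  ultimately have "apply_op I A v = (\<lambda>i. e * v i)"
    using coord_vec_inj[OF bij apply_op_vecs] by blast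
  moreover have "v \<noteq> (\<lambda>_. 0)"
  proof
    assume "v = (\<lambda>_. 0)"
    hence "u = 0\<^sub>v n" using uv u(1) by (auto simp: coord_vec_def)
    thus False using u(2) by simp
  qed
  ultimately show ?thesis using v by blast
qed

text \<open>A nonzero Hermitian operator has an eigenvector with nonzero eigenvalue: otherwise its
  coordinate matrix would be nilpotent, and nilpotent Hermitian operators vanish.\<close>
lemma hermitian_nonzero_eigenvector:
  assumes fin: "finite I" and herm: "hermitian_on I A"
    and nz: "apply_op I A x \<noteq> (\<lambda>_. 0)"
  shows "\<exists>v e. v \<in> vecs_on I \<and> v \<noteq> (\<lambda>_. 0) \<and> e \<noteq> 0 \<and> apply_op I A v = (\<lambda>i. e * v i)"
proof (rule ccontr)
  assume no: "\<not> ?thesis"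
  define n where "n = card I"
  obtain h where bij: "bij_betw h {0..<n} I" using ex_bij_betw_nat_finite[OF fin] n_def by blast
  have nil: "coord_mat n h A ^\<^sub>m n = 0\<^sub>m n n"
  proof (rule nilpotent_if_no_nonzero_eigenvalue)
    fix u e assume "eigenvector (coord_mat n h A) u e"
    from coord_eigenvector[OF bij this] no show "e = 0" by blast
  qed (simp add: coord_mat_def)
  have "I \<noteq> {}" using nz by (auto simp: apply_op_def)
  hence "n \<noteq> 0" using fin n_def by simp
  then obtain k where n: "n = Suc k" using not0_implies_Suc by blast
  have "coord_vec n h ((apply_op I A ^^ n) x) = coord_vec n h (\<lambda>_. 0)"
    unfolding coord_power[OF bij, symmetric] nil by (intro eq_vecI) (auto simp: coord_vec_def)
  moreover have "(apply_op I A ^^ n) x \<in> vecs_on I"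
    unfolding n by (simp only: funpow.simps(2) o_apply apply_op_vecs)
  ultimately have "(apply_op I A ^^ Suc k) x = (\<lambda>_. 0)"
    using coord_vec_inj[OF bij] n by (simp add: vecs_on_def)
  with hermitian_power_zero[OF fin herm] nz show False by blast
qed

lemma hermitian_unit_eigenvector:
  assumes fin: "finite I" and herm: "hermitian_on I A"
    and nz: "apply_op I A x \<noteq> (\<lambda>_. 0)"
  obtains u0 mu where "u0 \<in> vecs_on I" "ip I u0 u0 = 1" "mu \<noteq> 0"
    "apply_op I A u0 = (\<lambda>i. of_real mu * u0 i)"
proof -
  obtain v e where v: "v \<in> vecs_on I" "v \<noteq> (\<lambda>_. 0)" and e0: "e \<noteq> 0"
    and ev: "apply_op I A v = (\<lambda>i. e * v i)"
    using hermitian_nonzero_eigenvector[OF fin herm nz] by blast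
  have emu: "e = of_real (Re e)" by (rule hermitian_eigenvalue_real[OF fin herm v ev])
  define r where "r = Re (ip I v v)"
  have ipv: "ip I v v = of_real r" unfolding r_def ip_self by simp
  have "r \<noteq> 0" using ip_self_eq_0[OF fin v(1)] v(2) ipv by auto
  hence r: "r > 0" using ip_self_nonneg[of I v] unfolding r_def by linarith
  define u0 where "u0 = (\<lambda>i. of_real (inverse (sqrt r)) * v i)"
  show ?thesis
  proof
    show "u0 \<in> vecs_on I" using v(1) unfolding u0_def vecs_on_def by simp
    have "inverse (sqrt r) * (inverse (sqrt r) * r) = 1"
      using r by (simp add: field_simps flip: power2_eq_square)
    thus "ip I u0 u0 = 1"
      unfolding u0_def ip_scale_left ip_scale_right ipv
      by (metis complex_cnj_complex_of_real of_real_1 of_real_mult)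
    show "Re e \<noteq> 0" using e0 emu by (metis of_real_0)
    show "apply_op I A u0 = (\<lambda>i. of_real (Re e) * u0 i)"
      unfolding u0_def apply_op_scale ev by (simp add: mult.left_commute flip: emu)
  qed
qed

definition orthon :: "'i set \<Rightarrow> nat \<Rightarrow> (nat \<Rightarrow> 'i \<Rightarrow> complex) \<Rightarrow> bool" where
  "orthon I m u \<longleftrightarrow> (\<forall>k<m. u k \<in> vecs_on I) \<and>
     (\<forall>k<m. \<forall>l<m. ip I (u k) (u l) = (if k = l then 1 else 0))"

text \<open>Bessel's inequality: \<open>x - \<Sum>\<^sub>k \<langle>u\<^sub>k, x\<rangle> u\<^sub>k\<close> has squared norm
  \<open>\<parallel>x\<parallel>\<^sup>2 - \<Sum>\<^sub>k |\<langle>u\<^sub>k, x\<rangle>|\<^sup>2 \<ge> 0\<close>.\<close>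
lemma bessel_inequality:
  fixes m :: nat
  assumes ortho: "\<And>k l. k < m \<Longrightarrow> l < m \<Longrightarrow> ip I (u k) (u l) = (if k = l then 1 else 0)"
  shows "(\<Sum>k<m. (cmod (ip I (u k) x))\<^sup>2) \<le> Re (ip I x x)"
proof -
  define c where "c k = ip I (u k) x" for k
  define s where "s = (\<lambda>j. \<Sum>k<m. c k * u k j)"
  have xs: "ip I x s = (\<Sum>k<m. c k * cnj (c k))"
    unfolding s_def ip_sum_right c_def using ip_cnj_swap by metis
  have sx: "ip I s x = (\<Sum>k<m. cnj (c k) * c k)"
    unfolding s_def ip_sum_left c_def ..
  have us: "ip I (u k) s = c k" if k: "k < m" for k
  proof -
    have "ip I (u k) s = (\<Sum>l<m. if l = k then c l else 0)"
      unfolding s_def ip_sum_right using k ortho by (intro sum.cong) auto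
    also have "\<dots> = c k" using k by simp
    finally show ?thesis .
  qed
  have ss: "ip I s s = (\<Sum>k<m. cnj (c k) * c k)"
    unfolding s_def ip_sum_left using us by (simp add: s_def)
  have norm_sq: "cnj z * z = of_real ((cmod z)\<^sup>2)" for z
    using complex_norm_square[of z] by (simp add: mult.commute)
  have "ip I (\<lambda>j. x j - s j) (\<lambda>j. x j - s j) = ip I x x - of_real (\<Sum>k<m. (cmod (c k))\<^sup>2)"
    unfolding ip_diff_left ip_diff_right xs sx ss of_real_sum norm_sq[symmetric]
    by (simp add: mult.commute)
  thus ?thesis using ip_self_nonneg[of I "\<lambda>j. x j - s j"] unfolding c_def by simp
qed

text \<open>An orthonormal family has at most \<open>card I\<close> members: summing Bessel's inequality
  over the standard basis vectors \<open>e\<^sub>i\<close> gives \<open>m = \<Sum>\<^sub>k \<parallel>u\<^sub>k\<parallel>\<^sup>2 \<le> \<Sum>\<^sub>i \<parallel>e\<^sub>i\<parallel>\<^sup>2 = card I\<close>.\<close>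
lemma orthon_card_le:
  fixes u :: "nat \<Rightarrow> 'i \<Rightarrow> complex"
  assumes fin: "finite I" and orth: "orthon I m u"
  shows "m \<le> card I"
proof -
  define e where "e i = (\<lambda>j::'i. if j = i then (1::complex) else 0)" for i :: 'i
  have ortho: "\<And>k l. k < m \<Longrightarrow> l < m \<Longrightarrow> ip I (u k) (u l) = (if k = l then 1 else 0)"
    and vec: "\<And>k. k < m \<Longrightarrow> u k \<in> vecs_on I"
    using orth unfolding orthon_def by auto
  have coeff: "ip I (u k) (e i) = cnj (u k i)" if "i \<in> I" for k i
    using fin that unfolding ip_def e_def by (simp add: if_distrib cong: if_cong)
  have "(\<Sum>k<m. Re (ip I (u k) (u k))) = (\<Sum>k<m. \<Sum>i\<in>I. (cmod (u k i))\<^sup>2)"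
    by (simp add: ip_self)
  also have "\<dots> = (\<Sum>i\<in>I. \<Sum>k<m. (cmod (ip I (u k) (e i)))\<^sup>2)"
    by (subst sum.swap) (intro sum.cong refl, simp add: coeff)
  also have "\<dots> \<le> (\<Sum>i\<in>I. Re (ip I (e i) (e i)))"
    by (intro sum_mono bessel_inequality ortho)
  also have "\<dots> = (\<Sum>i\<in>I. 1)"
    using fin unfolding ip_def e_def by (intro sum.cong refl) (simp add: if_distrib cong: if_cong)
  finally show ?thesis using ortho by simp
qed

lemma orthon_extend:
  assumes orth: "orthon I m u" and u0: "u0 \<in> vecs_on I" "ip I u0 u0 = 1"
    and perp: "\<And>k. k < m \<Longrightarrow> ip I u0 (u k) = 0"
  shows "orthon I (Suc m) (u(m := u0))"
proof -
  have "ip I (u k) u0 = 0" if "k < m" for k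
    using perp[OF that] ip_cnj_swap[of I "u k" u0] by simp
  thus ?thesis using orth u0 perp unfolding orthon_def by (auto simp: less_Suc_eq)
qed

section \<open>The spectral decomposition of Hermitian operators\<close>

definition spec :: "'i set \<Rightarrow> 'i op \<Rightarrow> nat \<Rightarrow> (nat \<Rightarrow> real) \<Rightarrow> (nat \<Rightarrow> 'i \<Rightarrow> complex) \<Rightarrow> bool" where
  "spec I A m lam u \<longleftrightarrow> orthon I m u \<and>
     (\<forall>k<m. lam k \<noteq> 0 \<and> apply_op I A (u k) = (\<lambda>i. of_real (lam k) * u k i)) \<and>
     (\<forall>i\<in>I. \<forall>j\<in>I. A i j = (\<Sum>k<m. of_real (lam k) * u k i * cnj (u k j)))"

lemma spec_zero_op:
  assumes fin: "finite I" and zero: "\<And>x. apply_op I A x = (\<lambda>_. 0)"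
  shows "spec I A 0 lam u"
proof -
  have "A i j = 0" if "i \<in> I" "j \<in> I" for i j
  proof -
    have "apply_op I A (\<lambda>l. if l = j then 1 else 0) i = A i j"
      using that fin by (simp add: apply_op_def if_distrib cong: if_cong)
    thus ?thesis using zero by simp
  qed
  thus ?thesis unfolding spec_def orthon_def by simp
qed

lemma apply_op_rank_one_update:
  assumes u0: "u0 \<in> vecs_on I"
    and A: "\<forall>i\<in>I. \<forall>j\<in>I. A i j = B i j + c * u0 i * cnj (u0 j)"
  shows "apply_op I A x = (\<lambda>i. apply_op I B x i + c * u0 i * ip I u0 x)"
  using u0 A unfolding apply_op_def ip_def vecs_on_def
  by (auto simp: sum.distrib sum_distrib_left algebra_simps)

text \<open>For Hermitian \<open>A\<close>, eigenvectors with nonzero eigenvalue are orthogonal to the kernel: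
  \<open>\<mu> \<langle>v, w\<rangle> = \<langle>A v, w\<rangle> = \<langle>v, A w\<rangle> = 0\<close>.\<close>
lemma hermitian_eigvec_perp_kernel:
  assumes herm: "hermitian_on I A" and v: "apply_op I A v = (\<lambda>i. of_real mu * v i)"
    and mu: "mu \<noteq> 0" and w: "apply_op I A w = (\<lambda>_. 0)"
  shows "ip I v w = 0"
proof -
  have "of_real mu * ip I v w = ip I (apply_op I A v) w"
    unfolding v ip_scale_left by simp
  also have "\<dots> = ip I v (apply_op I A w)" by (rule hermitian_adjoint[OF herm])
  finally show ?thesis using mu w by simp
qed

lemma spec_add_rank_one:
  assumes sp: "spec I B m lam u" and herm: "hermitian_on I B"
    and u0: "u0 \<in> vecs_on I" "ip I u0 u0 = 1" and Bu0: "apply_op I B u0 = (\<lambda>_. 0)"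
    and mu: "mu \<noteq> 0"
    and A: "\<forall>i\<in>I. \<forall>j\<in>I. A i j = B i j + of_real mu * u0 i * cnj (u0 j)"
  shows "spec I A (Suc m) (lam(m := mu)) (u(m := u0))"
proof -
  have om: "orthon I m u"
    and eig: "\<And>k. k < m \<Longrightarrow> lam k \<noteq> 0 \<and> apply_op I B (u k) = (\<lambda>i. of_real (lam k) * u k i)"
    and dec: "\<And>i j. i \<in> I \<Longrightarrow> j \<in> I \<Longrightarrow> B i j = (\<Sum>k<m. of_real (lam k) * u k i * cnj (u k j))"
    using sp unfolding spec_def by auto
  have Aapp: "apply_op I A x = (\<lambda>i. apply_op I B x i + of_real mu * u0 i * ip I u0 x)" for x
    by (rule apply_op_rank_one_update[OF u0(1) A])
  have perp: "ip I u0 (u k) = 0" if k: "k < m" for k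
    using hermitian_eigvec_perp_kernel[OF herm _ _ Bu0, of "u k" "lam k"] eig[OF k]
      ip_cnj_swap[of I u0 "u k"] by simp
  have "orthon I (Suc m) (u(m := u0))" by (rule orthon_extend[OF om u0 perp])
  moreover have "\<forall>k<Suc m. (lam(m := mu)) k \<noteq> 0 \<and>
      apply_op I A ((u(m := u0)) k) = (\<lambda>i. of_real ((lam(m := mu)) k) * (u(m := u0)) k i)"
    using eig perp mu u0(2) Bu0 by (auto simp: Aapp less_Suc_eq)
  moreover have "\<forall>i\<in>I. \<forall>j\<in>I. A i j =
      (\<Sum>k<Suc m. of_real ((lam(m := mu)) k) * (u(m := u0)) k i * cnj ((u(m := u0)) k j))"
  proof (intro ballI)
    fix i j assume ij: "i \<in> I" "j \<in> I"
    have "(\<Sum>k<m. of_real ((lam(m := mu)) k) * (u(m := u0)) k i * cnj ((u(m := u0)) k j))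
        = B i j"
      unfolding dec[OF ij] by (intro sum.cong) auto
    thus "A i j = (\<Sum>k<Suc m. of_real ((lam(m := mu)) k) * (u(m := u0)) k i * cnj ((u(m := u0)) k j))"
      using A ij by simp
  qed
  ultimately show ?thesis unfolding spec_def by blast
qed

lemma hermitian_deflation:
  assumes herm: "hermitian_on I A" and u0: "u0 \<in> vecs_on I" "ip I u0 u0 = 1"
    and Au0: "apply_op I A u0 = (\<lambda>i. of_real mu * u0 i)" and mu: "mu \<noteq> 0"
  defines "B \<equiv> (\<lambda>i j. A i j - of_real mu * u0 i * cnj (u0 j))"
  shows "\<forall>i\<in>I. \<forall>j\<in>I. A i j = B i j + of_real mu * u0 i * cnj (u0 j)"
    and "hermitian_on I B"
    and "apply_op I B u0 = (\<lambda>_. 0)"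
    and "apply_op I A w = (\<lambda>_. 0) \<Longrightarrow> apply_op I B w = (\<lambda>_. 0)"
proof -
  show A_B: "\<forall>i\<in>I. \<forall>j\<in>I. A i j = B i j + of_real mu * u0 i * cnj (u0 j)"
    by (simp add: B_def)
  have Bapp: "apply_op I B y = (\<lambda>i. apply_op I A y i - of_real mu * u0 i * ip I u0 y)" for y
    unfolding apply_op_rank_one_update[OF u0(1) A_B] by simp
  show "hermitian_on I B"
    unfolding hermitian_on_def
  proof (intro ballI)
    fix i j assume ij: "i \<in> I" "j \<in> I"
    have "cnj (B j i) = cnj (A j i) - of_real mu * cnj (u0 j) * u0 i" by (simp add: B_def)
    also have "\<dots> = B i j"
      using hermitian_entry[OF herm ij(2) ij(1)] by (simp add: B_def algebra_simps)
    finally show "B i j = cnj (B j i)" ..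
  qed
  show "apply_op I B u0 = (\<lambda>_. 0)" unfolding Bapp Au0 u0(2) by simp
  show "apply_op I B w = (\<lambda>_. 0)" if w: "apply_op I A w = (\<lambda>_. 0)"
    unfolding Bapp w hermitian_eigvec_perp_kernel[OF herm Au0 mu w] by simp
qed

text \<open>The spectral theorem, by induction on the codimension of an orthonormal family \<open>ws\<close>
  in the kernel: split off a unit eigenvector \<open>u\<^sub>0\<close> with nonzero eigenvalue \<open>\<mu>\<close>; then
  \<open>A - \<mu> u\<^sub>0 u\<^sub>0\<^sup>*\<close> annihilates the larger orthonormal family \<open>ws, u\<^sub>0\<close>.  The family can never
  exceed \<open>card I\<close> members, which bounds the induction.\<close>
lemma spectral_from_kernel_family:
  assumes fin: "finite I"
  shows "card I + 1 = p + d \<Longrightarrow> hermitian_on I A \<Longrightarrow> orthon I p ws \<Longrightarrow>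
    (\<forall>k<p. apply_op I A (ws k) = (\<lambda>_. 0)) \<Longrightarrow> \<exists>m lam u. spec I A m lam u"
proof (induction d arbitrary: A p ws)
  case 0
  thus ?case using orthon_card_le[OF fin "0.prems"(3)] by simp
next
  case (Suc d)
  note herm = Suc.prems(2) and ker = Suc.prems(4)
  show ?case
  proof (cases "\<forall>x. apply_op I A x = (\<lambda>_. 0)")
    case True thus ?thesis using spec_zero_op[OF fin] by blast
  next
    case False
    then obtain u0 mu where u0: "u0 \<in> vecs_on I" "ip I u0 u0 = 1" and mu: "mu \<noteq> 0"
      and Au0: "apply_op I A u0 = (\<lambda>i. of_real mu * u0 i)"
      using hermitian_unit_eigenvector[OF fin herm] by metis
    define B where "B = (\<lambda>i j. A i j - of_real mu * u0 i * cnj (u0 j))"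
    have A_B: "\<forall>i\<in>I. \<forall>j\<in>I. A i j = B i j + of_real mu * u0 i * cnj (u0 j)"
      and hermB: "hermitian_on I B" and Bu0: "apply_op I B u0 = (\<lambda>_. 0)"
      and kerB: "\<And>w. apply_op I A w = (\<lambda>_. 0) \<Longrightarrow> apply_op I B w = (\<lambda>_. 0)"
      using hermitian_deflation[OF herm u0 Au0 mu] unfolding B_def by blast+
    have ws: "orthon I (Suc p) (ws(p := u0))"
      by (rule orthon_extend[OF Suc.prems(3) u0])
         (use ker hermitian_eigvec_perp_kernel[OF herm Au0 mu] in blast)
    have "apply_op I B ((ws(p := u0)) k) = (\<lambda>_. 0)" if "k < Suc p" for k
      using that Bu0 ker kerB by (auto simp: less_Suc_eq)
    then obtain m lam u where "spec I B m lam u"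
      using Suc.IH[OF _ hermB ws] Suc.prems(1) by auto
    from spec_add_rank_one[OF this hermB u0 Bu0 mu A_B] show ?thesis by blast
  qed
qed

theorem spectral_decomposition:
  assumes "finite I" "hermitian_on I A"
  shows "\<exists>m lam u. spec I A m lam u"
  using spectral_from_kernel_family[OF assms(1), of 0 "card I + 1" A "\<lambda>_ _. 0"] assms(2)
  unfolding orthon_def by simp

section \<open>Vanishing trace against a positive semidefinite operator\<close>

lemma nonneg_quadratic_linear_coeff_zero:
  fixes a b :: real
  assumes b: "b \<ge> 0" and nonneg: "\<And>t. 0 \<le> 2 * t * a + t\<^sup>2 * b"
  shows "a = 0"
proof -
  define t where "t = - a / (b + 1)"
  have "0 \<le> (2 * t * a + t\<^sup>2 * b) * (b + 1)\<^sup>2" using nonneg[of t] by simp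
  also have "(2 * t * a + t\<^sup>2 * b) * (b + 1)\<^sup>2 = 2 * a * (t * (b + 1)) * (b + 1) + (t * (b + 1))\<^sup>2 * b"
    by (simp add: algebra_simps power2_eq_square)
  also have "t * (b + 1) = - a" unfolding t_def using b by simp
  also have "2 * a * (- a) * (b + 1) + (- a)\<^sup>2 * b = - a\<^sup>2 * (b + 2)"
    by (simp add: algebra_simps power2_eq_square)
  finally have "a\<^sup>2 * (b + 2) \<le> 0" by simp
  hence "a\<^sup>2 \<le> 0" using b by (simp add: mult_le_0_iff)
  thus ?thesis by simp
qed

text \<open>For positive semidefinite \<open>R\<close>, \<open>\<langle>u, R u\<rangle> = 0\<close> forces \<open>R u = 0\<close>: with \<open>w = R u\<close>,
  the form at \<open>u + t w\<close> equals \<open>2 t \<parallel>w\<parallel>\<^sup>2 + t\<^sup>2 \<langle>w, R w\<rangle> \<ge> 0\<close> for all real \<open>t\<close>.\<close>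
lemma psd_form_zero_kills:
  assumes fin: "finite I" and psd: "psd_on I R" and z: "ip I u (apply_op I R u) = 0"
  shows "apply_op I R u = (\<lambda>_. 0)"
proof -
  have herm: "hermitian_on I R" using psd unfolding psd_on_def by simp
  define w where "w = apply_op I R u"
  define a where "a = Re (ip I w w)"
  define b where "b = Re (ip I w (apply_op I R w))"
  have wwr: "ip I w w = of_real a" unfolding a_def ip_self by simp
  have uw: "ip I u (apply_op I R w) = of_real a"
    using hermitian_adjoint[OF herm, of u w] wwr unfolding w_def by simp
  have bi: "ip I w (apply_op I R w) = of_real b"
    using psd_quadratic_form(1)[OF psd, of w] unfolding b_def by (simp add: complex_eq_iff)
  have "0 \<le> 2 * t * a + t\<^sup>2 * b" for t
  proof -
    define v where "v = (\<lambda>j. 1 * u j + of_real t * w j)"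
    have Rv: "apply_op I R v = (\<lambda>i. 1 * w i + of_real t * apply_op I R w i)"
      unfolding v_def apply_op_lin w_def ..
    have "ip I v (apply_op I R v)
        = cnj 1 * ip I u (apply_op I R v) + cnj (of_real t) * ip I w (apply_op I R v)"
      unfolding v_def by (rule ip_lin_left)
    also have "\<dots> = ip I u w + of_real t * ip I u (apply_op I R w)
          + of_real t * (ip I w w + of_real t * ip I w (apply_op I R w))"
      unfolding Rv ip_lin_right by simp
    also have "\<dots> = of_real (2 * t * a + t\<^sup>2 * b)"
      using z uw wwr bi unfolding w_def by (simp add: algebra_simps power2_eq_square)
    finally show ?thesis using psd_quadratic_form(2)[OF psd, of v] by simp
  qed
  hence "a = 0"
    using nonneg_quadratic_linear_coeff_zero psd_quadratic_form(2)[OF psd, of w] b_def by blast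
  hence "ip I w w = 0" using wwr by simp
  thus ?thesis using ip_self_eq_0[OF fin apply_op_vecs] unfolding w_def by blast
qed

lemma spec_trace:
  assumes sp: "spec I S m lam u"
  shows "tr I (opmul I S R) = (\<Sum>k<m. of_real (lam k) * ip I (u k) (apply_op I R (u k)))"
proof -
  have dec: "\<And>i j. i \<in> I \<Longrightarrow> j \<in> I \<Longrightarrow> S i j = (\<Sum>k<m. of_real (lam k) * u k i * cnj (u k j))"
    using sp unfolding spec_def by auto
  have "tr I (opmul I S R) = (\<Sum>i\<in>I. \<Sum>j\<in>I. \<Sum>k<m. of_real (lam k) * u k i * cnj (u k j) * R j i)"
    unfolding tr_def opmul_def using dec by (simp add: sum_distrib_right)
  also have "\<dots> = (\<Sum>i\<in>I. \<Sum>k<m. \<Sum>j\<in>I. of_real (lam k) * u k i * cnj (u k j) * R j i)"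
    by (rule sum.cong[OF refl], rule sum.swap)
  also have "\<dots> = (\<Sum>k<m. \<Sum>i\<in>I. \<Sum>j\<in>I. of_real (lam k) * u k i * cnj (u k j) * R j i)"
    by (rule sum.swap)
  also have "\<dots> = (\<Sum>k<m. \<Sum>j\<in>I. \<Sum>i\<in>I. of_real (lam k) * u k i * cnj (u k j) * R j i)"
    by (rule sum.cong[OF refl], rule sum.swap)
  also have "\<dots> = (\<Sum>k<m. of_real (lam k) * ip I (u k) (apply_op I R (u k)))"
    unfolding ip_def apply_op_def
    by (intro sum.cong refl) (simp add: sum_distrib_left algebra_simps)
  finally show ?thesis .
qed

lemma spec_eigenvector:
  assumes sp: "spec I S m lam u" and k: "k < m"
  shows "u k \<in> nz_eigvecs I S"
proof -
  have o: "u k \<in> vecs_on I" "ip I (u k) (u k) = 1" and e: "lam k \<noteq> 0"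
    "apply_op I S (u k) = (\<lambda>i. of_real (lam k) * u k i)"
    using sp k unfolding spec_def orthon_def by auto
  have "u k \<noteq> (\<lambda>_. 0)" using o(2) by auto
  thus ?thesis using o e unfolding nz_eigvecs_def by auto
qed

text \<open>Conversely, every eigenvector of \<open>S\<close> with nonzero eigenvalue \<open>e\<close> lies in the span of the
  \<open>u\<^sub>k\<close>, since \<open>v = S v / e = \<Sum>\<^sub>k (\<lambda>\<^sub>k \<langle>u\<^sub>k, v\<rangle> / e) u\<^sub>k\<close>.\<close>
lemma spec_nz_eigvec_span:
  assumes sp: "spec I S m lam u" and v: "v \<in> nz_eigvecs I S"
  obtains c where "v = (\<lambda>i. \<Sum>k<m. c k * u k i)"
proof -
  obtain e where v1: "v \<in> vecs_on I" "e \<noteq> 0" "apply_op I S v = (\<lambda>i. e * v i)"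
    using v unfolding nz_eigvecs_def by blast
  have vec: "\<And>k. k < m \<Longrightarrow> u k \<in> vecs_on I"
    and dec: "\<And>i j. i \<in> I \<Longrightarrow> j \<in> I \<Longrightarrow> S i j = (\<Sum>k<m. of_real (lam k) * u k i * cnj (u k j))"
    using sp unfolding spec_def orthon_def by auto
  have "v = (\<lambda>i. \<Sum>k<m. (of_real (lam k) * ip I (u k) v / e) * u k i)"
  proof
    fix i show "v i = (\<Sum>k<m. (of_real (lam k) * ip I (u k) v / e) * u k i)"
    proof (cases "i \<in> I")
      case True
      have "e * v i = (\<Sum>j\<in>I. \<Sum>k<m. of_real (lam k) * u k i * cnj (u k j) * v j)"
        using fun_cong[OF v1(3), of i] True dec unfolding apply_op_def by (simp add: sum_distrib_right)
      also have "\<dots> = (\<Sum>k<m. of_real (lam k) * u k i * ip I (u k) v)"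
        unfolding ip_def by (subst sum.swap) (simp add: sum_distrib_left algebra_simps)
      finally have "v i = (\<Sum>k<m. of_real (lam k) * u k i * ip I (u k) v) / e"
        using v1(2) by (simp add: field_simps)
      thus ?thesis by (simp add: sum_divide_distrib algebra_simps)
    next
      case False
      thus ?thesis using v1(1) vec unfolding vecs_on_def by simp
    qed
  qed
  thus ?thesis by (rule that)
qed

lemma in_cspan: "v \<in> E \<Longrightarrow> v \<in> cspan E"
  unfolding cspan_def by (rule CollectI, rule exI[of _ "{v}"], rule exI[of _ "\<lambda>_. 1"]) auto

lemma kills_cspan:
  assumes kill: "\<And>v. v \<in> E \<Longrightarrow> apply_op I R v = (\<lambda>_. 0)" and w: "w \<in> cspan E"
  shows "apply_op I R w = (\<lambda>_. 0)"
proof -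
  obtain T c where T: "finite T" "T \<subseteq> E" "w = (\<lambda>i. \<Sum>u\<in>T. c u * u i)"
    using w unfolding cspan_def by blast
  have "apply_op I R w = (\<lambda>i. \<Sum>u\<in>T. c u * apply_op I R u i)"
    unfolding T(3) using apply_op_sum[of I R c "\<lambda>u. u" T] by simp
  also have "\<dots> = (\<lambda>_. 0)" using kill T(2) by (intro ext sum.neutral) auto
  finally show ?thesis .
qed

lemma kills_support_iff_eigenbasis:
  assumes sp: "spec I S m lam u"
  shows "(\<forall>v\<in>support I S. apply_op I R v = (\<lambda>_. 0)) \<longleftrightarrow> (\<forall>k<m. apply_op I R (u k) = (\<lambda>_. 0))"
proof
  assume "\<forall>v\<in>support I S. apply_op I R v = (\<lambda>_. 0)"
  thus "\<forall>k<m. apply_op I R (u k) = (\<lambda>_. 0)"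
    using in_cspan[OF spec_eigenvector[OF sp]] unfolding support_def by blast
next
  assume basis: "\<forall>k<m. apply_op I R (u k) = (\<lambda>_. 0)"
  have "apply_op I R v = (\<lambda>_. 0)" if v: "v \<in> nz_eigvecs I S" for v
  proof -
    obtain c where "v = (\<lambda>i. \<Sum>k<m. c k * u k i)" using spec_nz_eigvec_span[OF sp v] .
    thus ?thesis using basis by (simp add: apply_op_sum)
  qed
  thus "\<forall>v\<in>support I S. apply_op I R v = (\<lambda>_. 0)"
    unfolding support_def using kills_cspan by blast
qed

lemma psd_spec_eigenvalue_pos:
  assumes psdS: "psd_on I S" and sp: "spec I S m lam u" and k: "k < m"
  shows "lam k > 0"
proof -
  have "ip I (u k) (u k) = 1" "lam k \<noteq> 0" "apply_op I S (u k) = (\<lambda>i. of_real (lam k) * u k i)"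
    using sp k unfolding spec_def orthon_def by auto
  thus ?thesis using psd_quadratic_form(2)[OF psdS, of "u k"] by (simp add: ip_scale_right)
qed

lemma weighted_sum_eq_0_iff:
  fixes lam q :: "nat \<Rightarrow> real"
  assumes lam: "\<And>k. k < m \<Longrightarrow> lam k > 0" and q: "\<And>k. k < m \<Longrightarrow> q k \<ge> 0"
  shows "(\<Sum>k<m. lam k * q k) = 0 \<longleftrightarrow> (\<forall>k<m. q k = 0)"
proof -
  have "(\<Sum>k<m. lam k * q k) = 0 \<longleftrightarrow> (\<forall>k\<in>{..<m}. lam k * q k = 0)"
    using lam q by (intro sum_nonneg_eq_0_iff) (auto intro: mult_nonneg_nonneg less_imp_le)
  also have "\<dots> \<longleftrightarrow> (\<forall>k<m. q k = 0)"
    using lam by (auto dest: less_imp_neq[symmetric])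
  finally show ?thesis .
qed

text \<open>In \<open>Tr(S R) = \<Sum>\<^sub>k \<lambda>\<^sub>k \<langle>u\<^sub>k, R u\<^sub>k\<rangle>\<close> all \<open>\<lambda>\<^sub>k\<close> are positive and all forms are nonnegative,
  so for PSD \<open>S\<close> and \<open>R\<close> the trace vanishes iff every \<open>\<langle>u\<^sub>k, R u\<^sub>k\<rangle>\<close> does, i.e. iff \<open>R u\<^sub>k = 0\<close>.\<close>
lemma psd_trace_zero_iff_kills_eigenbasis:
  assumes fin: "finite I" and psdS: "psd_on I S" and sp: "spec I S m lam u"
    and psdR: "psd_on I R"
  shows "tr I (opmul I S R) = 0 \<longleftrightarrow> (\<forall>k<m. apply_op I R (u k) = (\<lambda>_. 0))"
proof -
  define q where "q k = Re (ip I (u k) (apply_op I R (u k)))" for k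
  have form_real: "ip I (u k) (apply_op I R (u k)) = of_real (q k)" for k
    using psd_quadratic_form(1)[OF psdR, of "u k"] unfolding q_def by (simp add: complex_eq_iff)
  have q_nonneg: "q k \<ge> 0" for k
    using psd_quadratic_form(2)[OF psdR, of "u k"] unfolding q_def .
  have q_zero_iff: "q k = 0 \<longleftrightarrow> apply_op I R (u k) = (\<lambda>_. 0)" for k
    using psd_form_zero_kills[OF fin psdR, of "u k"] form_real[of k] unfolding q_def by auto
  have "tr I (opmul I S R) = of_real (\<Sum>k<m. lam k * q k)"
    unfolding spec_trace[OF sp] form_real by simp
  also have "\<dots> = 0 \<longleftrightarrow> (\<forall>k<m. q k = 0)"
    unfolding of_real_eq_0_iff
    by (intro weighted_sum_eq_0_iff psd_spec_eigenvalue_pos[OF psdS sp] q_nonneg)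
  finally show ?thesis using q_zero_iff by simp
qed

theorem trace_zero_iff_kills_support:
  assumes fin: "finite I" and psdS: "psd_on I S" and psdR: "psd_on I R"
  shows "tr I (opmul I S R) = 0 \<longleftrightarrow> (\<forall>v\<in>support I S. apply_op I R v = (\<lambda>_. 0))"
proof -
  obtain m lam u where sp: "spec I S m lam u"
    using spectral_decomposition[OF fin] psdS unfolding psd_on_def by blast
  show ?thesis
    unfolding psd_trace_zero_iff_kills_eigenbasis[OF fin psdS sp psdR]
      kills_support_iff_eigenbasis[OF sp] ..
qed

section \<open>States with equal support assign equal expectations to feasible operators\<close>

lemma tr_opmul_real:
  assumes hS: "hermitian_on I S" and hP: "hermitian_on I P"
  shows "tr I (opmul I S P) = of_real (Re (tr I (opmul I S P)))"
proof -
  have "cnj (tr I (opmul I S P)) = (\<Sum>i\<in>I. \<Sum>k\<in>I. cnj (S i k) * cnj (P k i))"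
    unfolding tr_def opmul_def by (simp add: cnj_sum)
  also have "\<dots> = (\<Sum>i\<in>I. \<Sum>k\<in>I. S k i * P i k)"
    using hermitian_entry[OF hS] hermitian_entry[OF hP] by (intro sum.cong refl) simp
  also have "\<dots> = (\<Sum>k\<in>I. \<Sum>i\<in>I. S k i * P i k)" by (rule sum.swap)
  also have "\<dots> = tr I (opmul I S P)" unfolding tr_def opmul_def ..
  finally show ?thesis by (simp add: complex_eq_iff)
qed

lemma tr_opmul_id_minus:
  assumes fin: "finite I"
  shows "tr I (opmul I X (\<lambda>i j. idop i j - P i j / c)) = tr I X - tr I (opmul I X P) / c"
proof -
  have "opmul I X (\<lambda>i j. idop i j - P i j / c) i i = X i i - opmul I X P i i / c"
    if i: "i \<in> I" for i
  proof -
    have "(\<Sum>k\<in>I. X i k * idop k i) = X i i"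
      using fin i unfolding idop_def by (simp add: if_distrib cong: if_cong)
    thus ?thesis unfolding opmul_def
      by (simp add: algebra_simps sum_subtractf sum_divide_distrib)
  qed
  thus ?thesis unfolding tr_def by (simp add: sum_subtractf sum_divide_distrib)
qed

text \<open>Let \<open>t = Tr(S\<^sub>1 P) \<noteq> 0\<close> and \<open>R = I - P/t \<ge> 0\<close>.  Then
  \<open>Tr(S\<^sub>1 R) = 0\<close>, so \<open>R\<close> annihilates the support of \<open>S\<^sub>1\<close>, which is the support of \<open>S\<^sub>2\<close>;
  hence \<open>Tr(S\<^sub>2 R) = 0\<close>, i.e. \<open>Tr(S\<^sub>2 P) = t\<close>.\<close>
theorem expectation_eq_if_same_support:
  assumes fin: "finite I" and S1: "density_on I S1" and S2: "density_on I S2"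
    and supp: "support I S2 = support I S1" and hP: "hermitian_on I P"
    and t: "Re (tr I (opmul I S1 P)) \<noteq> 0"
    and R: "psd_on I (\<lambda>i j. idop i j - P i j / of_real (Re (tr I (opmul I S1 P))))"
  shows "Re (tr I (opmul I S2 P)) = Re (tr I (opmul I S1 P))"
proof -
  define t where "t = Re (tr I (opmul I S1 P))"
  define R where "R = (\<lambda>i j. idop i j - P i j / of_real t)"
  have psd1: "psd_on I S1" "tr I S1 = 1" and psd2: "psd_on I S2" "tr I S2 = 1"
    using S1 S2 unfolding density_on_def by auto
  have psdR: "psd_on I R" using R unfolding R_def t_def .
  have t0: "t \<noteq> 0" using t unfolding t_def .
  have "tr I (opmul I S1 P) = of_real t"
    using tr_opmul_real[OF _ hP] psd1(1) unfolding t_def psd_on_def by blast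
  hence "tr I (opmul I S1 R) = 0"
    unfolding R_def tr_opmul_id_minus[OF fin] psd1(2) using t0 by simp
  hence "\<forall>v\<in>support I S2. apply_op I R v = (\<lambda>_. 0)"
    unfolding supp using trace_zero_iff_kills_support[OF fin psd1(1) psdR] by simp
  hence "tr I (opmul I S2 R) = 0"
    using trace_zero_iff_kills_support[OF fin psd2(1) psdR] by simp
  hence "tr I (opmul I S2 P) = of_real t"
    unfolding R_def tr_opmul_id_minus[OF fin] psd2(2) using t0 by (simp add: field_simps)
  thus ?thesis unfolding t_def by simp
qed

lemma finite_tidx: "finite (tidx dims)"
proof (rule finite_subset)
  show "tidx dims \<subseteq> {xs. set xs \<subseteq> {..<sum_list dims} \<and> length xs = length dims}"
  proof
    fix xs assume xs: "xs \<in> tidx dims"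
    have "x < sum_list dims" if x: "x \<in> set xs" for x
    proof -
      obtain k where k: "k < length xs" "xs ! k = x" using x by (auto simp: in_set_conv_nth)
      have "xs ! k < dims ! k" using xs k unfolding tidx_def by auto
      also have "dims ! k \<le> sum_list dims" using xs k unfolding tidx_def by (auto intro: elem_le_sum_list)
      finally show ?thesis using k by simp
    qed
    thus "xs \<in> {xs. set xs \<subseteq> {..<sum_list dims} \<and> length xs = length dims}"
      using xs unfolding tidx_def by auto
  qed
qed (rule finite_lists_length_eq, simp)

definition feasible :: "nat list \<Rightarrow> nat list op \<Rightarrow> nat list op \<Rightarrow> bool" where
  "feasible dims \<sigma> P \<longleftrightarrow> separable dims P \<and> psd_on (tidx dims) P \<and>
       Re (tr (tidx dims) (opmul (tidx dims) \<sigma> P)) > 0 \<and>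
       (let t = Re (tr (tidx dims) (opmul (tidx dims) \<sigma> P)) in
          psd_on (tidx dims) (\<lambda>i j. P i j / of_real t) \<and>
          psd_on (tidx dims) (\<lambda>i j. idop i j - P i j / of_real t))"

lemma dval_feasible:
  "dval dims \<sigma> = Inf {Re (tr (tidx dims) P) / Re (tr (tidx dims) (opmul (tidx dims) \<sigma> P)) | P.
                        feasible dims \<sigma> P}"
  unfolding dval_def feasible_def ..

text \<open>Feasibility for \<open>\<sigma>\<close> depends on \<open>\<sigma>\<close> only through \<open>Tr(\<sigma> P)\<close>, which is determined by
  the support.\<close>
lemma feasible_transfer:
  assumes S1: "density_on (tidx dims) S1" and S2: "density_on (tidx dims) S2"
    and supp: "support (tidx dims) S2 = support (tidx dims) S1"
    and feas: "feasible dims S1 P"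
  shows "feasible dims S2 P \<and>
    Re (tr (tidx dims) (opmul (tidx dims) S2 P)) = Re (tr (tidx dims) (opmul (tidx dims) S1 P))"
proof -
  have "Re (tr (tidx dims) (opmul (tidx dims) S2 P)) = Re (tr (tidx dims) (opmul (tidx dims) S1 P))"
    using feas unfolding feasible_def Let_def psd_on_def[of _ P]
    by (intro expectation_eq_if_same_support[OF finite_tidx S1 S2 supp]) auto
  thus ?thesis using feas unfolding feasible_def Let_def by simp
qed

theorem mainTheorem8:
  fixes dims :: "nat list" and \<sigma> \<sigma>'' :: "nat list op"
  assumes "density_on (tidx dims) \<sigma>"
    and "density_on (tidx dims) \<sigma>''"
    and "support (tidx dims) \<sigma>'' = support (tidx dims) \<sigma>"
  shows "dval dims \<sigma>'' = dval dims \<sigma>"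
proof -
  note to\<sigma>'' = feasible_transfer[OF assms]
  note to\<sigma> = feasible_transfer[OF assms(2,1) assms(3)[symmetric]]
  have "{Re (tr (tidx dims) P) / Re (tr (tidx dims) (opmul (tidx dims) \<sigma>'' P)) | P. feasible dims \<sigma>'' P}
      = {Re (tr (tidx dims) P) / Re (tr (tidx dims) (opmul (tidx dims) \<sigma> P)) | P. feasible dims \<sigma> P}"
    using to\<sigma>'' to\<sigma> by (smt (verit) Collect_cong)
  thus ?thesis unfolding dval_feasible by simp
qed

end
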